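(* Let $S$ be an entropy function for a finite set $X$ and $X'\subset X$. Then the function $S'$ on $2^{X'}$ defined by \[ S'(A):=\min_{\hat A\subseteq X\setminus X'}S(A\cup\hat A)\qquad(A\subseteq X')\] is an entropy function for $X'$.
   Context: An entropy function for a finite set $X$ is a function $S:2^X\to[0,\infty)$ with $S(\emptyset)=0$, $S(A)+S(B)\ge S(A\cap B)+S(A\cup B)$ and $S(A)+S(B)\ge S(A\setminus B)+S(B\setminus A)$ for all $A,B\subseteq X$. *)

theory Defs
  imports Complex_Main
begin

definition entropy_function :: "'a set \<Rightarrow> ('a set \<Rightarrow> real) \<Rightarrow> bool" where
  "entropy_function X S \<longleftrightarrow>
     finite X \<and>
     (\<forall>A. A \<subseteq> X \<longrightarrow> S A \<ge> 0) \<and>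
     S {} = 0 \<and>
     (\<forall>A B. A \<subseteq> X \<longrightarrow> B \<subseteq> X \<longrightarrow> S A + S B \<ge> S (A \<inter> B) + S (A \<union> B)) \<and>
     (\<forall>A B. A \<subseteq> X \<longrightarrow> B \<subseteq> X \<longrightarrow> S A + S B \<ge> S (A - B) + S (B - A))"

definition restrict_entropy :: "'a set \<Rightarrow> 'a set \<Rightarrow> ('a set \<Rightarrow> real) \<Rightarrow> 'a set \<Rightarrow> real" where
  "restrict_entropy X X' S A = Min ((\<lambda>Ahat. S (A \<union> Ahat)) ` Pow (X - X'))"

end

theory Submission
  imports Defs
begin

text \<open>Take minimisers \<open>H\<close>, \<open>K \<subseteq> X - X'\<close> for \<open>A\<close> and \<open>B\<close>. Intersection, union and
difference act separately on the parts inside \<open>X'\<close> and inside \<open>X - X'\<close>, so applying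
an inequality of \<open>S\<close> to \<open>A \<union> H\<close> and \<open>B \<union> K\<close> yields the same inequality for the
restricted function, whose values on the right-hand side are only smaller.\<close>

lemma restrict_entropy_le:
  assumes "finite X" "H \<subseteq> X - X'"
  shows "restrict_entropy X X' S A \<le> S (A \<union> H)"
  unfolding restrict_entropy_def using assms by (intro Min_le) auto

lemma restrict_entropy_attained:
  assumes "finite X"
  obtains H where "H \<subseteq> X - X'" "restrict_entropy X X' S A = S (A \<union> H)"
proof -
  have "restrict_entropy X X' S A \<in> (\<lambda>Ahat. S (A \<union> Ahat)) ` Pow (X - X')"
    unfolding restrict_entropy_def using assms by (intro Min_in) auto
  then show ?thesis using that by auto
qed

lemma restrict_entropy_nonneg:
  assumes "entropy_function X S" "X' \<subseteq> X" "A \<subseteq> X'"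
  shows "restrict_entropy X X' S A \<ge> 0"
proof -
  have "finite X" using assms(1) unfolding entropy_function_def by blast
  then obtain H where "H \<subseteq> X - X'" "restrict_entropy X X' S A = S (A \<union> H)"
    by (rule restrict_entropy_attained)
  moreover have "A \<union> H \<subseteq> X" using calculation(1) assms(2,3) by blast
  ultimately show ?thesis using assms(1) unfolding entropy_function_def by simp
qed

lemma restrict_entropy_empty:
  assumes "entropy_function X S" "X' \<subseteq> X"
  shows "restrict_entropy X X' S {} = 0"
proof -
  have "finite X" "S {} = 0" using assms(1) unfolding entropy_function_def by blast+
  then have "restrict_entropy X X' S {} \<le> 0"
    using restrict_entropy_le[of X "{}" X' S "{}"] by simp
  then show ?thesis using restrict_entropy_nonneg[OF assms] by fastforce
qed

lemma restrict_entropy_ineq: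
  fixes f g :: "'a set \<Rightarrow> 'a set \<Rightarrow> 'a set"
  assumes "finite X" "X' \<subseteq> X" "A \<subseteq> X'" "B \<subseteq> X'"
    and ineq: "\<And>C D. C \<subseteq> X \<Longrightarrow> D \<subseteq> X \<Longrightarrow> S (f C D) + S (g C D) \<le> S C + S D"
    and componentwise: "\<And>H K. H \<subseteq> X - X' \<Longrightarrow> K \<subseteq> X - X' \<Longrightarrow>
      f (A \<union> H) (B \<union> K) = f A B \<union> f H K \<and> g (A \<union> H) (B \<union> K) = g A B \<union> g H K \<and>
      f H K \<subseteq> X - X' \<and> g H K \<subseteq> X - X'"
  shows "restrict_entropy X X' S (f A B) + restrict_entropy X X' S (g A B)
    \<le> restrict_entropy X X' S A + restrict_entropy X X' S B"
proof -
  obtain H where H: "H \<subseteq> X - X'" "restrict_entropy X X' S A = S (A \<union> H)"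
    using restrict_entropy_attained[OF assms(1)] by blast
  obtain K where K: "K \<subseteq> X - X'" "restrict_entropy X X' S B = S (B \<union> K)"
    using restrict_entropy_attained[OF assms(1)] by blast
  have "A \<union> H \<subseteq> X" "B \<union> K \<subseteq> X" using H(1) K(1) assms(2-4) by auto
  then have "S (f A B \<union> f H K) + S (g A B \<union> g H K) \<le> S (A \<union> H) + S (B \<union> K)"
    using ineq componentwise[OF H(1) K(1)] by metis
  moreover have "restrict_entropy X X' S (f A B) \<le> S (f A B \<union> f H K)"
    and "restrict_entropy X X' S (g A B) \<le> S (g A B \<union> g H K)"
    using componentwise[OF H(1) K(1)] by (auto intro: restrict_entropy_le[OF assms(1)])
  ultimately show ?thesis using H(2) K(2) by linarith
qed

theorem proposition26:
  fixes X X' :: "'a set" and S :: "'a set \<Rightarrow> real"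
  assumes "entropy_function X S"
    and "X' \<subseteq> X"
  shows "entropy_function X' (restrict_entropy X X' S)"
proof -
  have fin: "finite X" using assms(1) unfolding entropy_function_def by blast
  have "finite X'" using fin assms(2) finite_subset by blast
  moreover have "restrict_entropy X X' S (A \<inter> B) + restrict_entropy X X' S (A \<union> B)
      \<le> restrict_entropy X X' S A + restrict_entropy X X' S B"
    if "A \<subseteq> X'" "B \<subseteq> X'" for A B
    using that assms by (intro restrict_entropy_ineq[OF fin assms(2)])
      (auto simp: entropy_function_def)
  moreover have "restrict_entropy X X' S (A - B) + restrict_entropy X X' S (B - A)
      \<le> restrict_entropy X X' S A + restrict_entropy X X' S B"
    if "A \<subseteq> X'" "B \<subseteq> X'" for A B
    using that assms by (intro restrict_entropy_ineq[OF fin assms(2), where f = "(-)"])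
      (auto simp: entropy_function_def)
  ultimately show ?thesis
    using restrict_entropy_nonneg[OF assms] restrict_entropy_empty[OF assms]
    unfolding entropy_function_def by blast
qed

end
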